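(* Let $c=1/3$ for quadrangulations and $c=1/2$ for triangulations. For $0<u<1$, let $\mathcal P(L;u)$ be the limiting density of $L(ku)$ as $k\to\infty$ under $P_k$ (with $k$ ranging over integers for which $ku$ is an integer): $$\mathcal P(L;u)=\frac{2}{\sqrt\pi}\frac{\sqrt L}{c^{3/2}}e^{-L/c}\cdot\frac{\left(e^{\frac{L}{cb}}\sqrt{\frac{\pi L}{cb}}\left(1-\mathrm{erf}\sqrt{\frac{L}{cb}}\right)-1\right)p\!\left(\frac{L}{cb}\right)+r\!\left(\frac{L}{cb}\right)}{4(\sqrt b+b)^3},$$ where $$b=b(u)=\frac{(1-u)^2}{u^2},\qquad p(\ell)=2b(b^2-1)\ell^2-(5b^3+3b+4)\ell+6(b^3-1),\qquad r(\ell)=b(15b^2-1)\ell+2(5b^3-1).$$ Then $\tilde{\mathcal P}(R;u)=b(u)\,\mathcal P(b(u)R;u)$, the limiting density of $R(d)=\mathcal L(d)/(k-d)^2$ at $d=ku$, converges as $u\to1$ to $$\tilde{\mathcal P}(R;1)=2\sqrt{\frac{R}{\pi c^5}}\,(R+c)-\frac{R}{c^3}(2R+3c)\,e^{R/c}\left(1-\mathrm{erf}\sqrt{\frac Rc}\right).$$ Moreover $\mathcal P(L;u)\to\frac{2}{\sqrt\pi}\frac{\sqrt L}{c^{3/2}}e^{-L/c}$ as $u\to0$.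
   Context: A planar quadrangulation (resp. triangulation) is a planar map all of whose faces have degree 4 (resp. 3). A $k$-pointed-rooted map carries: - a marked vertex $v_0$; - a marked edge $e_1$ oriented from a vertex $v_1$ at graph distance $k$ from $v_0$ to a vertex at distance $k-1$. Cutting along the leftmost shortest path from $v_1$ to $v_0$ (first step $e_1$, then always the leftmost edge decreasing the distance to $v_0$) gives a $k$-slice. Its left boundary consists of the $k$ edges from $v_1$ to $v_0$, and its right boundary of the $k-1$ edges from the endpoint of $e_1$ to $v_0$. Hull perimeter, quadrangulations ($2\le d\le k-1$). Start at the right-boundary vertex $v^{(0)}$ at distance $d-1$. Repeatedly, from $v^{(i)}$, follow the leftmost 2-step path $v^{(i)}\to w\to v^{(i+1)}$, with respect to the first edge of the leftmost shortest path from $v^{(i)}$ to $v_0$, where $d(v_0,w)=d$, $d(v_0,v^{(i+1)})=d-1$ and $v^{(i+1)}\ne v^{(i)}$. This stops after $p$ steps at the left-boundary vertex at distance $d-1$, and $\mathcal L(d)=2p$. Hull perimeter, triangulations ($1\le d\le k-1$). Start at the right-boundary vertex at distance $d$. Repeatedly follow the leftmost edge, in the same sense, to a distinct vertex at distance $d$, until reaching the left-boundary vertex at distance $d$ after $p$ steps; then $\mathcal L(d)=p$. $P_k$ is the $N\to\infty$ limit of the uniform measure on $k$-pointed-rooted maps of the given type with $N$ faces. $L(d)=\mathcal L(d)/d^2$, and $\mathrm{erf}(a)=\frac{2}{\sqrt\pi}\int_0^ae^{-z^2}dz$. *)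

theory Defs
  imports "HOL-Analysis.Analysis"
begin

definition erf :: "real \<Rightarrow> real" where
  "erf a = 2 / sqrt pi *
     (if 0 \<le> a then integral {0..a} (\<lambda>z. exp (- z\<^sup>2))
      else - integral {a..0} (\<lambda>z. exp (- z\<^sup>2)))"

definition bfun :: "real \<Rightarrow> real" where
  "bfun u = (1 - u)\<^sup>2 / u\<^sup>2"

definition ppoly :: "real \<Rightarrow> real \<Rightarrow> real" where
  "ppoly b l = 2 * b * (b\<^sup>2 - 1) * l\<^sup>2 - (5 * b ^ 3 + 3 * b + 4) * l + 6 * (b ^ 3 - 1)"

definition rpoly :: "real \<Rightarrow> real \<Rightarrow> real" where
  "rpoly b l = b * (15 * b\<^sup>2 - 1) * l + 2 * (5 * b ^ 3 - 1)"

definition Pdens :: "real \<Rightarrow> real \<Rightarrow> real \<Rightarrow> real" where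
  "Pdens c L u =
    (let b = bfun u; l = L / (c * b) in
     2 / sqrt pi * sqrt L / c powr (3/2) * exp (- L / c) *
     (((exp l * sqrt (pi * l) * (1 - erf (sqrt l)) - 1) * ppoly b l + rpoly b l)
       / (4 * (sqrt b + b) ^ 3)))"

definition Ptilde :: "real \<Rightarrow> real \<Rightarrow> real \<Rightarrow> real" where
  "Ptilde c R u = bfun u * Pdens c (bfun u * R) u"

definition Ptilde1 :: "real \<Rightarrow> real \<Rightarrow> real" where
  "Ptilde1 c R = 2 * sqrt (R / (pi * c ^ 5)) * (R + c)
     - R / c ^ 3 * (2 * R + 3 * c) * exp (R / c) * (1 - erf (sqrt (R / c)))"

end

theory Submission
  imports Defs "HOL-Real_Asymp.Real_Asymp"
begin

text \<open>Write \<open>l = L / (c b)\<close> for the argument of \<open>p\<close> and \<open>r\<close>. As \<open>u \<rightarrow> 1\<close> we have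
  \<open>b \<rightarrow> 0\<close>; at \<open>L = b R\<close> the variable \<open>l = R / c\<close> does not depend on \<open>b\<close>, and
  \<open>b sqrt (b R) / (sqrt b + b)\<^sup>3 = sqrt R / (1 + sqrt b)\<^sup>3\<close>, so the rescaled density is a function
  of \<open>b\<close> that is continuous at \<open>b = 0\<close>, where it takes the value \<open>Ptilde1 c R\<close>.
  As \<open>u \<rightarrow> 0\<close> we have \<open>b \<rightarrow> \<infinity>\<close> and \<open>l \<rightarrow> 0\<close>: the erf term tends to \<open>0\<close>, while \<open>p\<close> and
  \<open>r\<close>, normalised by \<open>4 (sqrt b + b)\<^sup>3\<close>, tend to \<open>3/2\<close> and \<open>5/2\<close>, so the correction factor
  tends to \<open>-3/2 + 5/2 = 1\<close>.\<close>

lemma erf_bounds: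
  assumes "0 \<le> a"
  shows "0 \<le> erf a" and "erf a \<le> 2 / sqrt pi * a"
proof -
  have int: "(\<lambda>z. exp (- z\<^sup>2)) integrable_on {0..a}"
    by (intro integrable_continuous_interval continuous_intros)
  have "0 \<le> integral {0..a} (\<lambda>z. exp (- z\<^sup>2))"
    by (rule integral_nonneg[OF int]) auto
  then show "0 \<le> erf a"
    using assms by (simp add: erf_def)
  have "integral {0..a} (\<lambda>z. exp (- z\<^sup>2)) \<le> integral {0..a} (\<lambda>z. 1::real)"
    by (rule integral_le[OF int]) auto
  then show "erf a \<le> 2 / sqrt pi * a"
    using assms by (simp add: erf_def divide_right_mono)
qed

lemma erf_sqrt_tendsto_0: "((\<lambda>l. erf (sqrt l)) \<longlongrightarrow> 0) (at_right 0)"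
proof (rule tendsto_sandwich)
  show "\<forall>\<^sub>F l in at_right 0. 0 \<le> erf (sqrt l)"
    by (rule eventually_at_right_less[THEN eventually_mono]) (rule erf_bounds; simp)
  show "\<forall>\<^sub>F l in at_right 0. erf (sqrt l) \<le> 2 / sqrt pi * sqrt l"
    by (rule eventually_at_right_less[THEN eventually_mono]) (rule erf_bounds; simp)
  have "((\<lambda>l. 2 / sqrt pi * sqrt l) \<longlongrightarrow> 2 / sqrt pi * sqrt 0) (at_right (0::real))"
    by (intro tendsto_intros)
  then show "((\<lambda>l. 2 / sqrt pi * sqrt l) \<longlongrightarrow> 0) (at_right 0)"
    by simp
qed simp

definition scaled_erfc :: "real \<Rightarrow> real" where
  "scaled_erfc l = exp l * sqrt (pi * l) * (1 - erf (sqrt l))"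

lemma scaled_erfc_tendsto_0: "(scaled_erfc \<longlongrightarrow> 0) (at_right 0)"
proof -
  have "((\<lambda>l. exp l * sqrt (pi * l) * (1 - erf (sqrt l)))
          \<longlongrightarrow> exp 0 * sqrt (pi * 0) * (1 - 0)) (at_right 0)"
    by (intro tendsto_intros erf_sqrt_tendsto_0)
  then show ?thesis
    by (simp add: scaled_erfc_def[abs_def])
qed

lemma bfun_tendsto_at_left_1: "(bfun \<longlongrightarrow> 0) (at_left 1)"
  unfolding bfun_def by real_asymp

lemma filterlim_bfun_at_right_0: "filterlim bfun at_top (at_right 0)"
  unfolding bfun_def by real_asymp

definition hull_correction :: "real \<Rightarrow> real \<Rightarrow> real" where
  "hull_correction b l =
     ((scaled_erfc l - 1) * ppoly b l + rpoly b l) / (4 * (sqrt b + b) ^ 3)"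

lemma Pdens_eq_hull_correction:
  "Pdens c L u = 2 / sqrt pi * sqrt L / c powr (3/2) * exp (- L / c)
                   * hull_correction (bfun u) (L / (c * bfun u))"
  by (simp add: Pdens_def hull_correction_def scaled_erfc_def Let_def)

lemma hull_correction_tendsto_1:
  fixes m :: real
  assumes "m > 0"
  shows "((\<lambda>b. hull_correction b (m / b)) \<longlongrightarrow> 1) at_top"
proof -
  have p: "((\<lambda>b. ppoly b (m / b) / (4 * (sqrt b + b) ^ 3)) \<longlongrightarrow> 3/2) at_top"
    using assms unfolding ppoly_def by real_asymp
  have r: "((\<lambda>b. rpoly b (m / b) / (4 * (sqrt b + b) ^ 3)) \<longlongrightarrow> 5/2) at_top"
    using assms unfolding rpoly_def by real_asymp
  have "filterlim (\<lambda>b. m / b) (at_right 0) at_top"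
    using assms by real_asymp
  then have "((\<lambda>b. scaled_erfc (m / b)) \<longlongrightarrow> 0) at_top"
    by (rule filterlim_compose[OF scaled_erfc_tendsto_0])
  then have "((\<lambda>b. (scaled_erfc (m / b) - 1) * (ppoly b (m / b) / (4 * (sqrt b + b) ^ 3))
                   + rpoly b (m / b) / (4 * (sqrt b + b) ^ 3)) \<longlongrightarrow> (0 - 1) * (3/2) + 5/2) at_top"
    by (intro tendsto_intros p r)
  then show ?thesis
    by (simp add: hull_correction_def add_divide_distrib)
qed

lemma Pdens_tendsto_at_right_0:
  assumes "c > 0" and "L > 0"
  shows "((\<lambda>u. Pdens c L u) \<longlongrightarrow> 2 / sqrt pi * sqrt L / c powr (3/2) * exp (- L / c)) (at_right 0)"
proof -
  have "((\<lambda>b. hull_correction b (L / c / b)) \<longlongrightarrow> 1) at_top"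
    using assms by (intro hull_correction_tendsto_1) simp
  then have "((\<lambda>u. hull_correction (bfun u) (L / (c * bfun u))) \<longlongrightarrow> 1) (at_right 0)"
    by (auto dest: filterlim_compose[OF _ filterlim_bfun_at_right_0] simp: divide_divide_eq_left)
  then have "((\<lambda>u. 2 / sqrt pi * sqrt L / c powr (3/2) * exp (- L / c)
                    * hull_correction (bfun u) (L / (c * bfun u)))
               \<longlongrightarrow> 2 / sqrt pi * sqrt L / c powr (3/2) * exp (- L / c) * 1) (at_right 0)"
    by (intro tendsto_intros)
  then show ?thesis
    by (simp add: Pdens_eq_hull_correction)
qed

definition Ptilde_profile :: "real \<Rightarrow> real \<Rightarrow> real \<Rightarrow> real" where
  "Ptilde_profile c R b = 2 / sqrt pi * sqrt R / c powr (3/2) * exp (- b * R / c)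
     * ((scaled_erfc (R / c) - 1) * ppoly b (R / c) + rpoly b (R / c)) / (4 * (1 + sqrt b) ^ 3)"

lemma Ptilde_eq_profile:
  assumes "0 < u" and "u < 1"
  shows "Ptilde c R u = Ptilde_profile c R (bfun u)"
proof -
  define b where "b = bfun u"
  have "b > 0"
    using assms by (simp add: b_def bfun_def)
  define s where "s = sqrt b"
  have "s > 0" and "sqrt b + b = s * (1 + s)" and "sqrt (b * R) = s * sqrt R"
    using \<open>b > 0\<close> by (simp_all add: s_def real_sqrt_mult algebra_simps)
  then have "b * sqrt (b * R) / (sqrt b + b) ^ 3 = s\<^sup>2 * s * sqrt R / (s ^ 3 * (1 + s) ^ 3)"
    using \<open>b > 0\<close> by (simp add: s_def power_mult_distrib)
  also have "\<dots> = sqrt R / (1 + sqrt b) ^ 3"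
    using \<open>s > 0\<close> by (simp add: s_def power3_eq_cube power2_eq_square)
  finally have scaling: "b * sqrt (b * R) / (sqrt b + b) ^ 3 = sqrt R / (1 + sqrt b) ^ 3" .
  have l: "b * R / (c * b) = R / c"
    using \<open>b > 0\<close> by simp
  define X where "X = (scaled_erfc (R / c) - 1) * ppoly b (R / c) + rpoly b (R / c)"
  have "hull_correction b (b * R / (c * b)) = X / (4 * (sqrt b + b) ^ 3)"
    by (simp add: hull_correction_def X_def l)
  then have "Ptilde c R u = 2 / sqrt pi / c powr (3/2) * exp (- b * R / c) * X / 4
                         * (b * sqrt (b * R) / (sqrt b + b) ^ 3)"
    by (simp add: Ptilde_def Pdens_eq_hull_correction b_def[symmetric] mult_ac)
  also have "\<dots> = Ptilde_profile c R b"
    unfolding scaling by (simp add: Ptilde_profile_def X_def mult_ac)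
  finally show ?thesis
    by (simp add: b_def)
qed

lemma Ptilde_profile_at_0:
  assumes c: "c > 0" and R: "R > 0"
  shows "Ptilde_profile c R 0 = Ptilde1 c R"
proof -
  define sr where "sr = sqrt R"
  define sp where "sp = sqrt pi"
  define sc where "sc = sqrt c"
  have h: "R = sr\<^sup>2" "pi = sp\<^sup>2" "c = sc\<^sup>2" "sr > 0" "sp > 0" "sc > 0"
    using c R by (auto simp: sr_def sp_def sc_def)
  have "c powr (3/2) = c powr (1 + 1/2)"
    by simp
  then have cp: "c powr (3/2) = c * sc"
    using c by (simp only: powr_add) (simp add: sc_def powr_half_sqrt)
  have "c ^ 5 = (c\<^sup>2)\<^sup>2 * c"
    by (simp add: eval_nat_numeral)
  then have "sqrt (c ^ 5) = c\<^sup>2 * sc"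
    by (simp only: real_sqrt_mult real_sqrt_abs sc_def) simp
  then have s5: "sqrt (R / (pi * c ^ 5)) = sr / (sp * c\<^sup>2 * sc)"
    by (simp add: sp_def sr_def real_sqrt_mult real_sqrt_divide)
  define ex where "ex = exp (R / c)"
  define er where "er = erf (sqrt (R / c))"
  have erfc: "scaled_erfc (R / c) = sp * sr / sc * (ex * (1 - er))"
    by (simp add: scaled_erfc_def ex_def er_def sp_def sr_def sc_def real_sqrt_mult real_sqrt_divide)
  show ?thesis
    unfolding Ptilde_profile_def Ptilde1_def erfc cp s5 ppoly_def rpoly_def
      ex_def[symmetric] er_def[symmetric] sr_def[symmetric] sp_def[symmetric]
    using h by (simp add: field_simps power2_eq_square power3_eq_cube)
qed

lemma Ptilde_tendsto_at_left_1:
  assumes "c > 0" and "R > 0"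
  shows "((\<lambda>u. Ptilde c R u) \<longlongrightarrow> Ptilde1 c R) (at_left 1)"
proof -
  have "((\<lambda>u. Ptilde_profile c R (bfun u)) \<longlongrightarrow> Ptilde_profile c R 0) (at_left 1)"
    unfolding Ptilde_profile_def ppoly_def rpoly_def
    by (intro tendsto_intros bfun_tendsto_at_left_1) (use assms in simp_all)
  moreover have "\<forall>\<^sub>F u in at_left 1. Ptilde_profile c R (bfun u) = Ptilde c R u"
    using eventually_at_left_real[of 0 1] by (auto elim!: eventually_mono simp: Ptilde_eq_profile)
  ultimately show ?thesis
    using Ptilde_profile_at_0[OF assms] by (simp add: tendsto_cong)
qed

theorem mainTheorem13:
  fixes c :: real
  assumes "c = 1/3 \<or> c = 1/2"
  shows "(\<forall>R>0. ((\<lambda>u. Ptilde c R u) \<longlongrightarrow> Ptilde1 c R) (at_left 1))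
       \<and> (\<forall>L>0. ((\<lambda>u. Pdens c L u) \<longlongrightarrow> 2 / sqrt pi * sqrt L / c powr (3/2) * exp (- L / c))
               (at_right 0))"
proof -
  have "c > 0"
    using assms by auto
  then show ?thesis
    using Ptilde_tendsto_at_left_1 Pdens_tendsto_at_right_0 by blast
qed

end
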